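(* Let $\sigma=\{\sigma_z\}_{z\in\mathbb{Z}}$ be i.i.d. strictly positive random variables with law $\mathbf{P}$, with $L(x):=1/\mathbf{P}(\sigma_0>x)$ slowly varying at infinity (i.e. $\lim_{u\to\infty}L(uv)/L(u)=1$ for every $v>0$). Let $h_t$ be any function with $h_t\to\infty$, $h_t^2=o(r_t)$, and such that, for all sufficiently large $t$, \[ L(\ell_t/h_t^3)>L(\ell_t)(1-1/h_t)\quad\text{and}\quad L(\ell_th_t^3)<L(\ell_t)(1+1/h_t).\] Then $\mathbf{P}(\mathcal{A}^h_t)\to1$ as $t\to\infty$, where $\mathcal{A}^h_t:=\{S_td_t<t/h_t\}$.
   Context: $\ell_t:=\min\{s\ge0: sL(s)\ge t\}$, $r_t:=L(\ell_t)$, $Z^{(1)}_t:=\min\{z\in\mathbb{Z}^+:\sigma_z>\ell_t\}$, $Z^{(2)}_t:=\max\{z\in\mathbb{Z}^-:\sigma_z>\ell_t\}$ (with $\mathbb{Z}^+$ the positive and $\mathbb{Z}^-$ the non-positive integers), $\Gamma_t:=\{Z^{(1)}_t,Z^{(2)}_t\}$, $S_t:=\sum_{Z^{(2)}_t<z<Z^{(1)}_t}\sigma_z$ and $d_t:=\max_{z\in\Gamma_t}|z|$. *)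

theory Defs
  imports "HOL-Probability.Probability" "HOL-Library.Landau_Symbols"
begin

definition tailL :: "'a measure \<Rightarrow> (int \<Rightarrow> 'a \<Rightarrow> real) \<Rightarrow> real \<Rightarrow> real" where
  "tailL M \<sigma> x = 1 / measure M {\<omega> \<in> space M. \<sigma> 0 \<omega> > x}"

definition slowly_varying :: "(real \<Rightarrow> real) \<Rightarrow> bool" where
  "slowly_varying L \<longleftrightarrow> (\<forall>v>0. ((\<lambda>u. L (u * v) / L u) \<longlongrightarrow> 1) at_top)"

text \<open>ell_t = min {s >= 0 : s L(s) >= t} (the minimum exists by right-continuity; written as Inf).\<close>
definition ellt :: "'a measure \<Rightarrow> (int \<Rightarrow> 'a \<Rightarrow> real) \<Rightarrow> real \<Rightarrow> real" where
  "ellt M \<sigma> t = Inf {s. s \<ge> 0 \<and> s * tailL M \<sigma> s \<ge> t}"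

definition rt :: "'a measure \<Rightarrow> (int \<Rightarrow> 'a \<Rightarrow> real) \<Rightarrow> real \<Rightarrow> real" where
  "rt M \<sigma> t = tailL M \<sigma> (ellt M \<sigma> t)"

definition Z1 :: "'a measure \<Rightarrow> (int \<Rightarrow> 'a \<Rightarrow> real) \<Rightarrow> real \<Rightarrow> 'a \<Rightarrow> int" where
  "Z1 M \<sigma> t \<omega> = int (LEAST n::nat. n \<ge> 1 \<and> \<sigma> (int n) \<omega> > ellt M \<sigma> t)"

definition Z2 :: "'a measure \<Rightarrow> (int \<Rightarrow> 'a \<Rightarrow> real) \<Rightarrow> real \<Rightarrow> 'a \<Rightarrow> int" where
  "Z2 M \<sigma> t \<omega> = - int (LEAST n::nat. \<sigma> (- int n) \<omega> > ellt M \<sigma> t)"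

definition St :: "'a measure \<Rightarrow> (int \<Rightarrow> 'a \<Rightarrow> real) \<Rightarrow> real \<Rightarrow> 'a \<Rightarrow> real" where
  "St M \<sigma> t \<omega> = (\<Sum>z\<in>{Z2 M \<sigma> t \<omega> <..< Z1 M \<sigma> t \<omega>}. \<sigma> z \<omega>)"

definition dt :: "'a measure \<Rightarrow> (int \<Rightarrow> 'a \<Rightarrow> real) \<Rightarrow> real \<Rightarrow> 'a \<Rightarrow> int" where
  "dt M \<sigma> t \<omega> = max \<bar>Z1 M \<sigma> t \<omega>\<bar> \<bar>Z2 M \<sigma> t \<omega>\<bar>"

definition event_A :: "'a measure \<Rightarrow> (int \<Rightarrow> 'a \<Rightarrow> real) \<Rightarrow> (real \<Rightarrow> real) \<Rightarrow> real \<Rightarrow> 'a set" where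
  "event_A M \<sigma> h t = {\<omega> \<in> space M. St M \<sigma> t \<omega> * real_of_int (dt M \<sigma> t \<omega>) < t / h t}"

end

theory Submission
  imports Defs "HOL-Real_Asymp.Real_Asymp"
begin

text \<open>Write p = P(sigma_0 > l_t), H = h_t, y = l_t / H^3 and K = ceiling (sqrt H / p). Slow
  variation of L gives P(sigma_0 > x/2) <= 9/8 P(sigma_0 > x) for x >= x_1, which yields both
  x P(sigma_0 > x)^2 -> oo and, by dyadic summation, E[sigma_0; sigma_0 <= y] <= x_1 + 3 y P(sigma_0 > y).
  Outside four exceptional events, S_t d_t is at most K times the sum of the sigma_z <= y with
  |z| <= K: some sigma_z with z in [1, K] and some with z in [-K, 0] exceed l_t (each fails with
  probability at most (1 - p)^K <= exp (- sqrt H)), so d_t <= K; no sigma_z with |z| <= K falls into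
  (y, l_t], an event of probability at most (2K + 1) p / (H - 1) by the hypothesis on L(l_t / h_t^3);
  and the truncated sum is controlled by Markov's inequality. Since t > 4 l_t / (9 p) and
  h_t^2 <= 1 / p, all four probabilities tend to 0.\<close>

lemma one_minus_power_le_exp:
  fixes a :: real
  assumes "0 \<le> a" "a \<le> 1"
  shows "(1 - a) ^ k \<le> exp (- a * k)"
proof -
  have "(1 - a) ^ k \<le> exp (- a) ^ k"
    using assms by (intro power_mono) (auto simp: exp_ge_add_one_self[of "-a", simplified])
  also have "\<dots> = exp (- a * k)" by (simp add: exp_of_nat_mult[symmetric] mult.commute)
  finally show ?thesis .
qed

lemma markov_term_le:
  fixes a p q H l t :: real and K :: nat
  assumes a: "0 \<le> a" and p: "0 < p" and H: "1 \<le> H" and l: "0 < l"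
    and K: "real K \<le> 2 * sqrt H / p" and ratio: "1 \<le> sqrt H / p"
    and q: "0 \<le> q" "q \<le> 2 * p" and t: "4/9 * l / p < t" and Hp: "H^2 \<le> 1 / p"
  shows "(2 * real K + 1) * K * H * (a + 3 * (l / H^3) * q) / t \<le> 45/2 * (a / (l * p^2) + 6 / H)"
proof -
  have "(2 * real K + 1) * K \<le> (5 * sqrt H / p) * (2 * sqrt H / p)"
    using K ratio by (intro mult_mono) auto
  also have "\<dots> = 10 * H / p^2"
    using H by (simp add: power2_eq_square field_simps)
  finally have KK: "(2 * real K + 1) * K \<le> 10 * H / p^2" .
  have "3 * (l / H^3) * q \<le> 3 * (l / H^3) * (2 * p)"
    using q(2) l H by (intro mult_left_mono) auto
  then have aq: "a + 3 * (l / H^3) * q \<le> a + 6 * l * p / H^3" by simp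
  have "0 < 4/9 * l / p" using p l by simp
  with t have "0 < t" by linarith
  then have t_inv: "1 / t \<le> 9 * p / (4 * l)"
    using t p l by (simp add: field_simps)
  have "(2 * real K + 1) * K * H * (a + 3 * (l / H^3) * q) \<le> (10 * H / p^2) * H * (a + 6 * l * p / H^3)"
    using KK aq H a p q(1) l by (intro mult_mono) auto
  then have "(2 * real K + 1) * K * H * (a + 3 * (l / H^3) * q) / t
      \<le> (10 * H / p^2) * H * (a + 6 * l * p / H^3) / t"
    using less_imp_le[OF \<open>0 < t\<close>] by (rule divide_right_mono)
  also have "\<dots> \<le> (10 * H / p^2) * H * (a + 6 * l * p / H^3) * (9 * p / (4 * l))"
    using mult_left_mono[OF t_inv, of "(10 * H / p^2) * H * (a + 6 * l * p / H^3)"] H p l a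
    by simp
  also have "\<dots> = 45/2 * (H^2 * a / (p * l) + 6 / H)"
    using H p l by (simp add: field_simps power2_eq_square power3_eq_cube)
  also have "\<dots> \<le> 45/2 * (a / (l * p^2) + 6 / H)"
  proof -
    have "H^2 * a / (p * l) \<le> (1 / p) * a / (p * l)"
      using Hp a p l by (intro divide_right_mono mult_right_mono) auto
    also have "\<dots> = a / (l * p^2)" by (simp add: power2_eq_square)
    finally show ?thesis by simp
  qed
  finally show ?thesis .
qed

lemma failure_terms_le:
  fixes a p q H l t :: real and K :: nat
  assumes a: "0 \<le> a" and p: "0 < p" "p \<le> 1" and H: "4 \<le> H" and l: "0 < l"
    and K: "K = nat \<lceil>sqrt H / p\<rceil>"
    and q: "0 \<le> q" "q - p \<le> p / (H - 1)" "q \<le> 2 * p"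
    and t: "4/9 * l / p < t" and Hp: "H^2 \<le> 1 / p"
  shows "2 * (1 - p) ^ K + (2 * real K + 1) * (q - p) + (2 * real K + 1) * K * H * (a + 3 * (l / H^3) * q) / t
    \<le> 2 * exp (- sqrt H) + (2 * sqrt H + 3) / (H - 1) + 45/2 * (a / (l * p^2) + 6 / H)"
proof -
  have "2 \<le> sqrt H" using H real_sqrt_le_mono[of 4 H] by simp
  then have ratio: "1 \<le> sqrt H / p" using p by (simp add: field_simps)
  have K_ge: "sqrt H / p \<le> real K" and K_le: "real K \<le> sqrt H / p + 1"
    using ratio unfolding K by linarith+
  have "(1 - p) ^ K \<le> exp (- p * K)" using p by (intro one_minus_power_le_exp) auto
  also have "\<dots> \<le> exp (- sqrt H)" using K_ge p by (simp add: field_simps)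
  finally have first: "(1 - p) ^ K \<le> exp (- sqrt H)" .
  have "(2 * real K + 1) * (q - p) \<le> (2 * real K + 1) * p / (H - 1)"
    using mult_left_mono[OF q(2), of "2 * real K + 1"] by simp
  also have "\<dots> \<le> (2 * (sqrt H / p + 1) + 1) * p / (H - 1)"
    using K_le p H by (intro divide_right_mono mult_right_mono) auto
  also have "\<dots> \<le> (2 * sqrt H + 3) / (H - 1)"
    using p H by (intro divide_right_mono) (auto simp: field_simps)
  finally have second: "(2 * real K + 1) * (q - p) \<le> (2 * sqrt H + 3) / (H - 1)" .
  have "real K \<le> 2 * sqrt H / p" using K_le ratio by simp
  then have "(2 * real K + 1) * K * H * (a + 3 * (l / H^3) * q) / t \<le> 45/2 * (a / (l * p^2) + 6 / H)"
    using a p H l ratio q t Hp by (intro markov_term_le) auto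
  then show ?thesis using first second by linarith
qed

lemma window_sum_times_radius_less:
  fixes s :: "int \<Rightarrow> real" and K :: nat and l y c :: real
  assumes right: "\<exists>n\<in>{1..K}. s (int n) > l"
    and left: "\<exists>n\<in>{0..K}. s (- int n) > l"
    and pos: "\<forall>z\<in>{-int K..int K}. s z > 0"
    and gap: "\<forall>z\<in>{-int K..int K}. \<not> (y < s z \<and> s z \<le> l)"
    and small: "(\<Sum>z\<in>{-int K..int K}. (if 0 \<le> s z \<and> s z \<le> y then s z else 0)) * K < c"
  shows "(\<Sum>z\<in>{- int (LEAST n::nat. s (- int n) > l) <..< int (LEAST n::nat. n \<ge> 1 \<and> s (int n) > l)}. s z)
          * real_of_int (max \<bar>int (LEAST n::nat. n \<ge> 1 \<and> s (int n) > l)\<bar> \<bar>- int (LEAST n::nat. s (- int n) > l)\<bar>) < c"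
proof -
  define n0 where "n0 = (LEAST n::nat. n \<ge> 1 \<and> s (int n) > l)"
  define m0 where "m0 = (LEAST n::nat. s (- int n) > l)"
  obtain a where a: "a \<in> {1..K}" "s (int a) > l" using right by auto
  obtain b where b: "b \<in> {0..K}" "s (- int b) > l" using left by auto
  have "n0 \<le> a" unfolding n0_def by (rule Least_le) (use a in auto)
  then have n0K: "n0 \<le> K" using a by auto
  have "m0 \<le> b" unfolding m0_def by (rule Least_le) (use b in auto)
  then have m0K: "m0 \<le> K" using b by auto
  define f where "f = (\<lambda>x. if 0 \<le> x \<and> x \<le> y then x else (0::real))"
  have window: "{- int m0 <..< int n0} \<subseteq> {-int K..int K}" using n0K m0K by auto
  have inner: "s z \<le> l" if "z \<in> {- int m0 <..< int n0}" for z
  proof (cases "z \<ge> 1")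
    case True
    then have "nat z < n0" using that by auto
    then have "\<not> (nat z \<ge> 1 \<and> s (int (nat z)) > l)" unfolding n0_def by (rule not_less_Least)
    then show ?thesis using True by auto
  next
    case False
    then have "nat (-z) < m0" using that by auto
    then have "\<not> (s (- int (nat (-z))) > l)" unfolding m0_def by (rule not_less_Least)
    then show ?thesis using False by auto
  qed
  have "s z = f (s z)" if "z \<in> {- int m0 <..< int n0}" for z
    using inner[OF that] gap pos window that unfolding f_def by force
  then have "(\<Sum>z\<in>{- int m0 <..< int n0}. s z) = (\<Sum>z\<in>{- int m0 <..< int n0}. f (s z))"
    by (intro sum.cong) auto
  also have "\<dots> \<le> (\<Sum>z\<in>{-int K..int K}. f (s z))"
    by (rule sum_mono2[OF _ window]) (auto simp: f_def)
  finally have sum_le: "(\<Sum>z\<in>{- int m0 <..< int n0}. s z) \<le> (\<Sum>z\<in>{-int K..int K}. f (s z))" .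
  have "0 \<le> (\<Sum>z\<in>{- int m0 <..< int n0}. s z)"
    using pos window by (intro sum_nonneg) (auto simp: less_imp_le)
  moreover have "real_of_int (max \<bar>int n0\<bar> \<bar>- int m0\<bar>) \<le> real K" using n0K m0K by auto
  ultimately have "(\<Sum>z\<in>{- int m0 <..< int n0}. s z) * real_of_int (max \<bar>int n0\<bar> \<bar>- int m0\<bar>)
     \<le> (\<Sum>z\<in>{-int K..int K}. f (s z)) * real K"
    using sum_le by (intro mult_mono') auto
  also have "\<dots> < c" using small unfolding f_def by simp
  finally show ?thesis unfolding n0_def m0_def .
qed

definition truncated :: "real \<Rightarrow> real \<Rightarrow> real" where
  "truncated y s = (if 0 \<le> s \<and> s \<le> y then s else 0)"

lemma truncated_nonneg: "0 \<le> truncated y s"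
  by (simp add: truncated_def)

lemma truncated_le_dyadic_sum:
  fixes a y s :: real
  assumes a: "0 < a" and N: "y \<le> a * 2^N"
  shows "truncated y s \<le> a + (\<Sum>j<N. (if a \<le> y/2^j then y/2^j else 0) * indicator {y/2^Suc j<..} s)"
proof -
  let ?c = "\<lambda>j. (if a \<le> y/2^j then y/2^j else 0) * indicator {y/2^Suc j<..} s"
  have c0: "0 \<le> ?c j" for j using a by (auto simp: indicator_def)
  then have sum0: "0 \<le> (\<Sum>j<N. ?c j)" by (intro sum_nonneg) auto
  show ?thesis
  proof (cases "0 \<le> s \<and> s \<le> y \<and> a < s")
    case False
    then have "truncated y s \<le> a" using a by (auto simp: truncated_def)
    then show ?thesis using sum0 by linarith
  next
    case True
    then have s: "0 \<le> s" "s \<le> y" "a < s" by auto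
    have "y / 2^Suc N \<le> a * 2^N / 2^Suc N" using N by (intro divide_right_mono) auto
    also have "\<dots> = a / 2" by simp
    finally have exN: "s > y / 2^Suc N" using s a by linarith
    define j0 where "j0 = (LEAST j. s > y / 2^Suc j)"
    have j0: "s > y / 2^Suc j0" unfolding j0_def by (rule LeastI[of _ N]) (rule exN)
    have "j0 \<le> N" unfolding j0_def by (rule Least_le) (rule exN)
    have s_le: "s \<le> y / 2^j0"
    proof (cases j0)
      case (Suc k)
      then have "\<not> s > y / 2^Suc k" unfolding j0_def using not_less_Least[of k "\<lambda>j. s > y / 2^Suc j"]
        by (simp add: j0_def)
      then show ?thesis using Suc by simp
    qed (use s in simp)
    have "j0 \<noteq> N"
    proof
      assume "j0 = N"
      then have "s \<le> y / 2^N" using s_le by simp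
      also have "\<dots> \<le> a" using N by (simp add: field_simps)
      finally show False using s by simp
    qed
    with \<open>j0 \<le> N\<close> have "j0 < N" by simp
    have "s \<le> ?c j0" using j0 s_le s by (auto simp: indicator_def)
    also have "\<dots> \<le> (\<Sum>j<N. ?c j)" by (rule member_le_sum) (use c0 \<open>j0 < N\<close> in auto)
    finally show ?thesis using s a by (simp add: truncated_def)
  qed
qed

locale tail_doubling =
  fixes F :: "real \<Rightarrow> real" and x1 :: real
  assumes tail_pos: "0 < F x"
    and tail_antimono: "x \<le> x' \<Longrightarrow> F x' \<le> F x"
    and threshold_pos: "0 < x1"
    and tail_halving: "x1 \<le> x \<Longrightarrow> F (x / 2) \<le> 9/8 * F x"
begin

lemma tail_halving_iterate: "x1 \<le> y / 2^j \<Longrightarrow> F (y / 2^Suc j) \<le> (9/8)^Suc j * F y"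
proof (induction j)
  case 0
  then show ?case using tail_halving[of y] by simp
next
  case (Suc j)
  have "y / 2^Suc j > 0" using Suc.prems threshold_pos by linarith
  then have "y / 2^j \<ge> y / 2^Suc j" by (simp add: divide_simps)
  then have "F (y / 2^Suc j) \<le> (9/8)^Suc j * F y" using Suc by simp
  moreover have "F ((y / 2^Suc j) / 2) \<le> 9/8 * F (y / 2^Suc j)"
    using tail_halving[of "y / 2^Suc j"] Suc.prems by simp
  ultimately show ?case by simp
qed

lemma tail_threshold_le: "x1 \<le> x \<Longrightarrow> x \<le> x1 * 2^n \<Longrightarrow> F x1 \<le> (9/8)^n * F x"
proof (induction n arbitrary: x)
  case (Suc n)
  show ?case
  proof (cases "x1 \<le> x / 2")
    case False
    then have "F x1 \<le> F (x / 2)" by (intro tail_antimono) auto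
    also have "\<dots> \<le> 9/8 * F x" using tail_halving Suc.prems by simp
    also have "\<dots> \<le> (9/8)^Suc n * F x" using tail_pos[of x] by (intro mult_right_mono) auto
    finally show ?thesis .
  next
    case True
    then have "F x1 \<le> (9/8)^n * F (x / 2)" using Suc threshold_pos by simp
    also have "\<dots> \<le> (9/8)^n * (9/8 * F x)" using tail_halving[of x] Suc.prems
      by (intro mult_left_mono) auto
    finally show ?thesis by simp
  qed
qed simp

text \<open>Since (9/8)^4 < 2, the tail decays no faster than x^(-1/4).\<close>

lemma tail_fourth_power_lower:
  assumes "x1 \<le> x"
  shows "F x1 ^ 4 * x1 \<le> 2 * x * F x ^ 4"
proof -
  obtain n0 :: nat where "x / x1 < 2 ^ n0" using real_arch_pow[of 2 "x / x1"] by auto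
  then have ex: "x \<le> x1 * 2^n0" using threshold_pos by (simp add: field_simps)
  define n where "n = (LEAST n. x \<le> x1 * 2^n)"
  have n: "x \<le> x1 * 2^n" unfolding n_def by (rule LeastI[of _ n0]) (rule ex)
  have n2: "2^n \<le> 2 * x / x1"
  proof (cases n)
    case 0
    then show ?thesis using assms threshold_pos by (simp add: field_simps)
  next
    case (Suc m)
    then have "\<not> x \<le> x1 * 2^m"
      using not_less_Least[of m "\<lambda>n. x \<le> x1 * 2^n"] by (simp add: n_def)
    then show ?thesis using Suc threshold_pos by (simp add: field_simps)
  qed
  have "F x1 ^ 4 \<le> ((9/8)^n * F x)^4"
    using tail_threshold_le[OF assms n] tail_pos[of x1] by (intro power_mono) auto
  also have "\<dots> = ((9/8)^4)^n * F x ^ 4" by (simp add: power_mult_distrib flip: power_mult)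
  also have "\<dots> \<le> 2^n * F x ^ 4"
    using tail_pos[of x] by (intro mult_right_mono power_mono) (auto simp: numeral_eq_Suc)
  also have "\<dots> \<le> (2 * x / x1) * F x ^ 4" using tail_pos[of x] by (intro mult_right_mono n2) auto
  finally show ?thesis using threshold_pos by (simp add: field_simps)
qed

lemma filterlim_times_tail_squared: "filterlim (\<lambda>x. x * F x ^ 2) at_top at_top"
proof -
  define c where "c = F x1 ^ 4 * x1 / 2"
  have c: "c > 0" unfolding c_def using tail_pos[of x1] threshold_pos by simp
  have "filterlim (\<lambda>x. sqrt (c * x)) at_top at_top"
    using c by real_asymp
  moreover have "eventually (\<lambda>x. sqrt (c * x) \<le> x * F x ^ 2) at_top"
  proof (rule eventually_at_top_linorderI[of x1])
    fix x assume x: "x \<ge> x1"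
    have "x * (F x1 ^ 4 * x1) \<le> x * (2 * x * F x ^ 4)"
      using tail_fourth_power_lower[OF x] x threshold_pos by (intro mult_left_mono) auto
    then have "c * x \<le> (x * F x ^ 2)^2" unfolding c_def
      by (simp add: power2_eq_square field_simps power4_eq_xxxx)
    moreover have "0 \<le> x * F x ^ 2" using x threshold_pos tail_pos[of x] by simp
    ultimately show "sqrt (c * x) \<le> x * F x ^ 2" by (simp add: real_le_lsqrt)
  qed
  ultimately show ?thesis by (rule filterlim_at_top_mono)
qed

end

locale slowly_varying_iid = prob_space M for M :: "'a measure" +
  fixes \<sigma> :: "int \<Rightarrow> 'a \<Rightarrow> real"
  assumes measurable_\<sigma>[measurable]: "\<And>z. \<sigma> z \<in> borel_measurable M"
    and indep: "indep_vars (\<lambda>_. borel) \<sigma> UNIV"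
    and identically_distributed: "\<And>z. distr M borel (\<sigma> z) = distr M borel (\<sigma> 0)"
    and positive: "\<And>z. AE \<omega> in M. \<sigma> z \<omega> > 0"
    and slowly_varying_tailL: "slowly_varying (tailL M \<sigma>)"
begin

abbreviation ell :: "real \<Rightarrow> real" where
  "ell \<equiv> ellt M \<sigma>"

definition tail :: "real \<Rightarrow> real" where
  "tail x = prob {\<omega>\<in>space M. \<sigma> 0 \<omega> > x}"

lemma tailL_eq: "tailL M \<sigma> x = 1 / tail x"
  by (simp add: tailL_def tail_def)

lemma tail_nonneg: "0 \<le> tail x"
  by (simp add: tail_def)

lemma tail_le_1: "tail x \<le> 1"
  by (simp add: tail_def)

lemma tail_antimono: "x \<le> x' \<Longrightarrow> tail x' \<le> tail x"
  unfolding tail_def by (rule finite_measure_mono) auto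

lemma prob_vimage_eq:
  assumes "B \<in> sets borel"
  shows "prob (\<sigma> z -` B \<inter> space M) = prob (\<sigma> 0 -` B \<inter> space M)"
  using measure_distr[OF measurable_\<sigma>[of z] assms] measure_distr[OF measurable_\<sigma>[of 0] assms]
    identically_distributed[of z]
  by simp

lemma prob_gt: "prob {\<omega>\<in>space M. \<sigma> z \<omega> > x} = tail x"
proof -
  have "prob {\<omega>\<in>space M. \<sigma> z \<omega> > x} = prob (\<sigma> z -` {x<..} \<inter> space M)"
    by (rule arg_cong[where f=prob]) auto
  also have "\<dots> = prob (\<sigma> 0 -` {x<..} \<inter> space M)"
    by (rule prob_vimage_eq) simp
  also have "\<dots> = tail x" unfolding tail_def by (rule arg_cong[where f=prob]) auto
  finally show ?thesis .
qed

lemma prob_le: "prob {\<omega>\<in>space M. \<sigma> z \<omega> \<le> x} = 1 - tail x"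
proof -
  have "{\<omega>\<in>space M. \<sigma> z \<omega> \<le> x} = space M - {\<omega>\<in>space M. \<sigma> z \<omega> > x}" by auto
  then show ?thesis using prob_compl[of "{\<omega>\<in>space M. \<sigma> z \<omega> > x}"] prob_gt by simp
qed

lemma prob_between:
  assumes "y \<le> l"
  shows "prob {\<omega>\<in>space M. y < \<sigma> z \<omega> \<and> \<sigma> z \<omega> \<le> l} = tail y - tail l"
proof -
  have decomp: "{\<omega>\<in>space M. \<sigma> z \<omega> > y} = {\<omega>\<in>space M. y < \<sigma> z \<omega> \<and> \<sigma> z \<omega> \<le> l} \<union> {\<omega>\<in>space M. \<sigma> z \<omega> > l}"
    using assms by auto
  have "prob {\<omega>\<in>space M. \<sigma> z \<omega> > y}
      = prob {\<omega>\<in>space M. y < \<sigma> z \<omega> \<and> \<sigma> z \<omega> \<le> l} + prob {\<omega>\<in>space M. \<sigma> z \<omega> > l}"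
    unfolding decomp by (rule finite_measure_Union) auto
  then show ?thesis using prob_gt by simp
qed

text \<open>If the tail vanished beyond some point, \<open>tailL\<close> would be \<open>1 / 0 = 0\<close> there and
  \<open>tailL u / tailL u\<close> would be \<open>0\<close> rather than tend to \<open>1\<close>.\<close>

lemma tail_pos: "0 < tail x"
proof (rule ccontr)
  assume "\<not> 0 < tail x"
  then have tail0: "tail x = 0" using tail_nonneg[of x] by simp
  have "eventually (\<lambda>u. tailL M \<sigma> (u * 1) / tailL M \<sigma> u = 0) at_top"
  proof (rule eventually_at_top_linorderI[of x])
    fix u assume "x \<le> u"
    then have "tail u = 0" using tail_antimono[of x u] tail0 tail_nonneg[of u] by simp
    then show "tailL M \<sigma> (u * 1) / tailL M \<sigma> u = 0" by (simp add: tailL_eq)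
  qed
  then have "((\<lambda>u. tailL M \<sigma> (u * 1) / tailL M \<sigma> u) \<longlongrightarrow> 0) at_top"
    by (rule tendsto_eventually)
  moreover have "((\<lambda>u. tailL M \<sigma> (u * 1) / tailL M \<sigma> u) \<longlongrightarrow> 1) at_top"
    using slowly_varying_tailL[unfolded slowly_varying_def, rule_format, of 1] by simp
  ultimately show False using tendsto_unique[OF trivial_limit_at_top_linorder] by force
qed

lemma exists_tail_doubling: "\<exists>x1. tail_doubling tail x1"
proof -
  have "((\<lambda>u. tailL M \<sigma> (u * (1/2)) / tailL M \<sigma> u) \<longlongrightarrow> 1) at_top"
    using slowly_varying_tailL[unfolded slowly_varying_def, rule_format, of "1/2"] by simp
  then have "eventually (\<lambda>u. tailL M \<sigma> (u * (1/2)) / tailL M \<sigma> u > 8/9) at_top"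
    by (rule order_tendstoD) simp
  then obtain x0 where x0: "\<And>u. u \<ge> x0 \<Longrightarrow> tailL M \<sigma> (u * (1/2)) / tailL M \<sigma> u > 8/9"
    unfolding eventually_at_top_linorder by auto
  have halving: "tail (x / 2) \<le> 9/8 * tail x" if "max x0 1 \<le> x" for x
  proof -
    have "tail x / tail (x / 2) > 8/9" using x0[of x] that by (simp add: tailL_eq)
    then show ?thesis using tail_pos[of "x / 2"] by (simp add: field_simps)
  qed
  then have "tail_doubling tail (max x0 1)"
    by (intro tail_doubling.intro tail_pos tail_antimono halving) simp_all
  then show ?thesis ..
qed

lemma tailL_ge_1: "1 \<le> tailL M \<sigma> x"
  using tail_pos[of x] tail_le_1[of x] by (simp add: tailL_eq)

lemma tailL_mono: "x \<le> x' \<Longrightarrow> tailL M \<sigma> x \<le> tailL M \<sigma> x'"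
  using tail_antimono[of x x'] tail_pos[of x'] by (simp add: tailL_eq frac_le)

lemma below_ell:
  assumes "0 \<le> s" "s < ell t"
  shows "s * tailL M \<sigma> s < t"
proof (rule ccontr)
  assume "\<not> s * tailL M \<sigma> s < t"
  then have "s \<in> {s. s \<ge> 0 \<and> s * tailL M \<sigma> s \<ge> t}" using assms by auto
  then have "ell t \<le> s" unfolding ellt_def by (rule cInf_lower) (auto intro: bdd_belowI[of _ 0])
  then show False using assms by simp
qed

lemma filterlim_ell_at_top: "filterlim ell at_top at_top"
proof (subst filterlim_at_top, intro allI)
  fix B :: real
  define B' where "B' = max B 0"
  show "eventually (\<lambda>t. B \<le> ell t) at_top"
  proof (rule eventually_at_top_linorderI[of "B' * tailL M \<sigma> B' + 1"])
    fix t assume t: "t \<ge> B' * tailL M \<sigma> B' + 1"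
    have "0 \<le> B' * tailL M \<sigma> B'" using tailL_ge_1[of B'] by (simp add: B'_def)
    then have mem: "t \<in> {s. s \<ge> 0 \<and> s * tailL M \<sigma> s \<ge> t}"
      using t tailL_ge_1[of t] by (auto simp: mult_le_cancel_left1)
    have "B' \<le> ell t" unfolding ellt_def
    proof (rule cInf_greatest)
      show "{s. s \<ge> 0 \<and> s * tailL M \<sigma> s \<ge> t} \<noteq> {}" using mem by blast
    next
      fix s assume "s \<in> {s. s \<ge> 0 \<and> s * tailL M \<sigma> s \<ge> t}"
      then have s: "s \<ge> 0" "s * tailL M \<sigma> s \<ge> t" by auto
      show "B' \<le> s"
      proof (rule ccontr)
        assume "\<not> B' \<le> s"
        then have "s * tailL M \<sigma> s \<le> B' * tailL M \<sigma> B'"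
          using s tailL_mono[of s B'] tailL_ge_1[of s] by (intro mult_mono) auto
        then show False using s t by simp
      qed
    qed
    then show "B \<le> ell t" unfolding B'_def by simp
  qed
qed

lemma measurable_Z1[measurable]: "Z1 M \<sigma> t \<in> measurable M (count_space UNIV)"
  unfolding Z1_def by measurable

lemma measurable_Z2[measurable]: "Z2 M \<sigma> t \<in> measurable M (count_space UNIV)"
  unfolding Z2_def by measurable

lemma measurable_St[measurable]: "St M \<sigma> t \<in> borel_measurable M"
proof -
  have inner: "(\<lambda>\<omega>. \<Sum>z\<in>{Z2 M \<sigma> t \<omega> <..< b}. \<sigma> z \<omega>) \<in> borel_measurable M" for b
    by (rule measurable_compose_countable'[where f="\<lambda>a \<omega>. \<Sum>z\<in>{a<..<b}. \<sigma> z \<omega>" and I=UNIV]) auto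
  show ?thesis unfolding St_def
    by (rule measurable_compose_countable'[where f="\<lambda>b \<omega>. \<Sum>z\<in>{Z2 M \<sigma> t \<omega> <..< b}. \<sigma> z \<omega>"
          and I=UNIV, OF inner]) auto
qed

lemma measurable_dt[measurable]: "(\<lambda>\<omega>. real_of_int (dt M \<sigma> t \<omega>)) \<in> borel_measurable M"
proof -
  have inner: "(\<lambda>\<omega>. real_of_int (max \<bar>b\<bar> \<bar>Z2 M \<sigma> t \<omega>\<bar>)) \<in> borel_measurable M" for b
    by (rule measurable_compose_countable'[where f="\<lambda>a \<omega>. real_of_int (max \<bar>b\<bar> \<bar>a\<bar>)" and I=UNIV]) auto
  show ?thesis unfolding dt_def
    by (rule measurable_compose_countable'[where f="\<lambda>b \<omega>. real_of_int (max \<bar>b\<bar> \<bar>Z2 M \<sigma> t \<omega>\<bar>)"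
          and I=UNIV, OF inner]) auto
qed

lemma sets_event_A[measurable]: "event_A M \<sigma> h t \<in> sets M"
  unfolding event_A_def by measurable

lemma prob_all_le:
  assumes "finite J" "J \<noteq> {}"
  shows "prob {\<omega>\<in>space M. \<forall>i\<in>J. \<sigma> i \<omega> \<le> l} = (1 - tail l) ^ card J"
proof -
  have "prob (\<Inter>i\<in>J. \<sigma> i -` {..l} \<inter> space M) = (\<Prod>i\<in>J. prob (\<sigma> i -` {..l} \<inter> space M))"
    by (rule indep_varsD[OF indep assms(2,1)]) auto
  moreover have "(\<Inter>i\<in>J. \<sigma> i -` {..l} \<inter> space M) = {\<omega>\<in>space M. \<forall>i\<in>J. \<sigma> i \<omega> \<le> l}"
    using assms by auto
  moreover have "\<sigma> i -` {..l} \<inter> space M = {\<omega>\<in>space M. \<sigma> i \<omega> \<le> l}" for i by auto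
  ultimately show ?thesis using prob_le by simp
qed

lemma prob_some_between_le:
  assumes "y \<le> l"
  shows "prob {\<omega>\<in>space M. \<exists>z\<in>{-int K..int K}. y < \<sigma> z \<omega> \<and> \<sigma> z \<omega> \<le> l}
    \<le> (2 * real K + 1) * (tail y - tail l)"
proof -
  have "{\<omega>\<in>space M. \<exists>z\<in>{-int K..int K}. y < \<sigma> z \<omega> \<and> \<sigma> z \<omega> \<le> l}
      = (\<Union>z\<in>{-int K..int K}. {\<omega>\<in>space M. y < \<sigma> z \<omega> \<and> \<sigma> z \<omega> \<le> l})" by auto
  then have "prob {\<omega>\<in>space M. \<exists>z\<in>{-int K..int K}. y < \<sigma> z \<omega> \<and> \<sigma> z \<omega> \<le> l}
      \<le> (\<Sum>z\<in>{-int K..int K}. prob {\<omega>\<in>space M. y < \<sigma> z \<omega> \<and> \<sigma> z \<omega> \<le> l})"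
    by (simp add: measure_UNION_le)
  also have "\<dots> = (\<Sum>z\<in>{-int K..int K}. tail y - tail l)"
    using prob_between[OF assms] by simp
  also have "\<dots> = (2 * real K + 1) * (tail y - tail l)"
    by (simp add: algebra_simps)
  finally show ?thesis .
qed

lemma integrable_truncated: "integrable M (\<lambda>\<omega>. truncated y (\<sigma> z \<omega>))"
  by (rule integrable_const_bound[where B="max y 0"]) (auto simp: truncated_def)

lemma integral_indicator_gt: "(\<integral>\<omega>. indicator {a<..} (\<sigma> z \<omega>) \<partial>M) = tail a"
proof -
  have "(\<integral>\<omega>. indicator {a<..} (\<sigma> z \<omega>) \<partial>M) = integral\<^sup>L M (indicator {\<omega>\<in>space M. \<sigma> z \<omega> > a})"
    by (rule Bochner_Integration.integral_cong) (auto simp: indicator_def)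
  also have "\<dots> = tail a" using prob_gt by simp
  finally show ?thesis .
qed

lemma integrable_step: "integrable M (\<lambda>\<omega>. c * indicator {b<..} (\<sigma> z \<omega>) :: real)"
  by (rule integrable_const_bound[where B="\<bar>c\<bar>"]) (auto simp: indicator_def)

lemma integral_step_sum:
  "(\<integral>\<omega>. a + (\<Sum>j<N. c j * indicator {b j<..} (\<sigma> z \<omega>)) \<partial>M) = a + (\<Sum>j<N. c j * tail (b j))"
proof -
  have "(\<integral>\<omega>. a + (\<Sum>j<N. c j * indicator {b j<..} (\<sigma> z \<omega>)) \<partial>M)
      = (\<integral>\<omega>. a \<partial>M) + (\<integral>\<omega>. (\<Sum>j<N. c j * indicator {b j<..} (\<sigma> z \<omega>)) \<partial>M)"
    by (rule Bochner_Integration.integral_add)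
      (intro integrable_const Bochner_Integration.integrable_sum integrable_step)+
  also have "(\<integral>\<omega>. (\<Sum>j<N. c j * indicator {b j<..} (\<sigma> z \<omega>)) \<partial>M)
      = (\<Sum>j<N. \<integral>\<omega>. c j * indicator {b j<..} (\<sigma> z \<omega>) \<partial>M)"
    by (rule Bochner_Integration.integral_sum) (rule integrable_step)
  also have "\<dots> = (\<Sum>j<N. c j * tail (b j))"
    by (intro sum.cong refl)
      (simp only: Bochner_Integration.integral_mult_right_zero integral_indicator_gt)
  finally show ?thesis by (simp add: prob_space)
qed

lemma mem_event_A_if_good_window:
  assumes \<omega>: "\<omega> \<in> space M" and pos: "\<forall>z. 0 < \<sigma> z \<omega>" and K: "1 \<le> K"
    and right: "\<exists>n\<in>{1..K}. ell t < \<sigma> (int n) \<omega>"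
    and left: "\<exists>n\<in>{0..K}. ell t < \<sigma> (- int n) \<omega>"
    and gap: "\<forall>z\<in>{-int K..int K}. \<not> (y < \<sigma> z \<omega> \<and> \<sigma> z \<omega> \<le> ell t)"
    and small: "(\<Sum>z\<in>{-int K..int K}. truncated y (\<sigma> z \<omega>)) < t / (h t * real K)"
  shows "\<omega> \<in> event_A M \<sigma> h t"
proof -
  have "(\<Sum>z\<in>{-int K..int K}. truncated y (\<sigma> z \<omega>)) * K < t / (h t * real K) * K"
    using small K by (intro mult_strict_right_mono) auto
  then have "(\<Sum>z\<in>{-int K..int K}. truncated y (\<sigma> z \<omega>)) * K < t / h t"
    using K by simp
  then have "St M \<sigma> t \<omega> * real_of_int (dt M \<sigma> t \<omega>) < t / h t"
    unfolding St_def dt_def Z1_def Z2_def truncated_def using right left pos gap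
    by (intro window_sum_times_radius_less) auto
  then show ?thesis using \<omega> unfolding event_A_def by auto
qed

lemma tail_window_le:
  assumes H: "2 \<le> H" and hyp: "tailL M \<sigma> l * (1 - 1 / H) < tailL M \<sigma> y"
  shows "tail y - tail l \<le> tail l / (H - 1)" and "tail y \<le> 2 * tail l"
proof -
  have "tail y * (H - 1) < tail l * H"
    using hyp H tail_pos[of l] tail_pos[of y] by (simp add: tailL_eq field_simps)
  then have less: "tail y < tail l * H / (H - 1)" using H by (simp add: field_simps)
  moreover have "tail l * H / (H - 1) - tail l = tail l / (H - 1)" using H by (simp add: field_simps)
  ultimately show "tail y - tail l \<le> tail l / (H - 1)" by linarith
  have "tail l * H / (H - 1) \<le> 2 * tail l" using H tail_pos[of l] by (simp add: field_simps)
  with less show "tail y \<le> 2 * tail l" by linarith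
qed

definition failure_bound :: "real \<Rightarrow> real \<Rightarrow> real \<Rightarrow> real" where
  "failure_bound x1 H l = 2 * exp (- sqrt H) + (2 * sqrt H + 3) / (H - 1)
     + 45/2 * (x1 / (l * tail l ^ 2) + 6 / H)"

context
  fixes x1 :: real
  assumes doubling: "tail_doubling tail x1"
begin

interpretation tail_doubling tail x1
  by (fact doubling)

lemma truncated_mean_le:
  assumes y: "0 < y"
  shows "(\<integral>\<omega>. truncated y (\<sigma> z \<omega>) \<partial>M) \<le> x1 + 3 * y * tail y"
proof -
  obtain N :: nat where "y / x1 < 2 ^ N" using real_arch_pow[of 2 "y / x1"] by auto
  then have N: "y \<le> x1 * 2^N" using threshold_pos by (simp add: field_simps)
  define c where "c = (\<lambda>j::nat. if x1 \<le> y / 2^j then y / 2^j else 0)"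
  have "(\<integral>\<omega>. truncated y (\<sigma> z \<omega>) \<partial>M)
      \<le> (\<integral>\<omega>. x1 + (\<Sum>j<N. c j * indicator {y / 2^Suc j<..} (\<sigma> z \<omega>)) \<partial>M)"
    using truncated_le_dyadic_sum[OF threshold_pos N] unfolding c_def
    by (intro integral_mono integrable_truncated Bochner_Integration.integrable_add
        integrable_const Bochner_Integration.integrable_sum integrable_step)
  also have "\<dots> = x1 + (\<Sum>j<N. c j * tail (y / 2^Suc j))"
    by (rule integral_step_sum)
  also have "(\<Sum>j<N. c j * tail (y / 2^Suc j)) \<le> (\<Sum>j<N. 9/8 * y * tail y * (9/16)^j)"
  proof (rule sum_mono)
    fix j
    show "c j * tail (y / 2^Suc j) \<le> 9/8 * y * tail y * (9/16)^j"
    proof (cases "x1 \<le> y / 2^j")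
      case True
      then have "c j * tail (y / 2^Suc j) = y / 2^j * tail (y / 2^Suc j)" by (simp add: c_def)
      also have "\<dots> \<le> y / 2^j * ((9/8)^Suc j * tail y)"
        using tail_halving_iterate[OF True] y by (intro mult_left_mono) auto
      also have "\<dots> = 9/8 * y * tail y * (9/16)^j"
        by (simp add: field_simps power_divide flip: power_mult_distrib)
      finally show ?thesis .
    qed (use y tail_nonneg[of y] in \<open>auto simp: c_def\<close>)
  qed
  also have "(\<Sum>j<N. 9/8 * y * tail y * (9/16::real)^j) = 9/8 * y * tail y * (\<Sum>j<N. (9/16)^j)"
    by (simp add: sum_distrib_left)
  also have "\<dots> \<le> 9/8 * y * tail y * (16/7)"
  proof (rule mult_left_mono)
    have "(\<Sum>j<N. (9/16::real)^j) = ((9/16)^N - 1) / (9/16 - 1)" by (rule geometric_sum) simp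
    also have "\<dots> \<le> 16/7" by (simp add: field_simps)
    finally show "(\<Sum>j<N. (9/16::real)^j) \<le> 16/7" .
  qed (use y tail_nonneg[of y] in auto)
  finally have "(\<integral>\<omega>. truncated y (\<sigma> z \<omega>) \<partial>M) \<le> x1 + 9/8 * y * tail y * (16/7)" by simp
  moreover have "0 \<le> y * tail y" using y tail_nonneg[of y] by simp
  ultimately show ?thesis by linarith
qed

lemma prob_truncated_sum_ge_le:
  assumes "0 < y" "0 < c"
  shows "prob {\<omega>\<in>space M. c \<le> (\<Sum>z\<in>{-int K..int K}. truncated y (\<sigma> z \<omega>))}
    \<le> (2 * real K + 1) * (x1 + 3 * y * tail y) / c"
proof -
  have "prob {\<omega>\<in>space M. c \<le> (\<Sum>z\<in>{-int K..int K}. truncated y (\<sigma> z \<omega>))}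
     \<le> (\<integral>\<omega>. (\<Sum>z\<in>{-int K..int K}. truncated y (\<sigma> z \<omega>)) \<partial>M) / c"
    by (rule integral_Markov_inequality_measure[where A="space M"])
       (auto intro!: sum_nonneg Bochner_Integration.integrable_sum integrable_truncated
         simp: truncated_nonneg assms)
  also have "(\<integral>\<omega>. (\<Sum>z\<in>{-int K..int K}. truncated y (\<sigma> z \<omega>)) \<partial>M)
     = (\<Sum>z\<in>{-int K..int K}. \<integral>\<omega>. truncated y (\<sigma> z \<omega>) \<partial>M)"
    by (rule Bochner_Integration.integral_sum) (rule integrable_truncated)
  also have "\<dots> \<le> (\<Sum>z\<in>{-int K..int K}. x1 + 3 * y * tail y)"
    by (intro sum_mono truncated_mean_le assms)
  also have "\<dots> = (2 * real K + 1) * (x1 + 3 * y * tail y)" by (simp add: algebra_simps)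
  finally show ?thesis using assms by (simp add: divide_right_mono)
qed

lemma ell_over_tail_less:
  assumes "0 < t" "2 * x1 \<le> ell t"
  shows "4/9 * ell t / tail (ell t) < t"
proof -
  define l where "l = ell t"
  have l: "0 < l" using assms threshold_pos unfolding l_def by simp
  have "8/9 / tail l \<le> tailL M \<sigma> (l / 2)"
    using tail_halving[of l] assms threshold_pos tail_pos[of l] tail_pos[of "l / 2"]
    by (simp add: l_def tailL_eq field_simps)
  then have "l / 2 * (8/9 / tail l) \<le> l / 2 * tailL M \<sigma> (l / 2)"
    using l by (intro mult_left_mono) auto
  also have "\<dots> < t" using below_ell[of "l / 2" t] l unfolding l_def by simp
  finally show ?thesis unfolding l_def[symmetric] by (simp add: field_simps)
qed

lemma prob_event_A_ge:
  assumes t: "0 < t" and h: "0 < h t" and K: "1 \<le> K" and y: "0 < y" "y \<le> ell t"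
  shows "1 - (2 * (1 - tail (ell t)) ^ K + (2 * real K + 1) * (tail y - tail (ell t))
      + (2 * real K + 1) * K * h t * (x1 + 3 * y * tail y) / t) \<le> prob (event_A M \<sigma> h t)"
proof -
  define l where "l = ell t"
  define c where "c = t / (h t * K)"
  define no_right where "no_right = {\<omega>\<in>space M. \<forall>i\<in>int ` {1..K}. \<sigma> i \<omega> \<le> l}"
  define no_left where "no_left = {\<omega>\<in>space M. \<forall>i\<in>(\<lambda>n. - int n) ` {0..K}. \<sigma> i \<omega> \<le> l}"
  define hit_gap where "hit_gap = {\<omega>\<in>space M. \<exists>z\<in>{-int K..int K}. y < \<sigma> z \<omega> \<and> \<sigma> z \<omega> \<le> l}"
  define large_sum where
    "large_sum = {\<omega>\<in>space M. c \<le> (\<Sum>z\<in>{-int K..int K}. truncated y (\<sigma> z \<omega>))}"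
  have sets: "no_right \<in> sets M" "no_left \<in> sets M" "hit_gap \<in> sets M" "large_sum \<in> sets M"
    unfolding no_right_def no_left_def hit_gap_def large_sum_def truncated_def by measurable
  have p: "0 \<le> 1 - tail l" "1 - tail l \<le> 1" using tail_le_1 tail_pos[of l] by (auto simp: less_imp_le)
  have "prob no_right = (1 - tail l) ^ K"
    unfolding no_right_def using K by (subst prob_all_le) (auto simp: card_image)
  moreover have "prob no_left = (1 - tail l) ^ Suc K"
    unfolding no_left_def by (subst prob_all_le) (auto simp: card_image inj_on_def)
  moreover have "(1 - tail l) ^ Suc K \<le> (1 - tail l) ^ K"
    using p by (intro power_decreasing) auto
  moreover have "prob hit_gap \<le> (2 * real K + 1) * (tail y - tail l)"
    unfolding hit_gap_def using y by (intro prob_some_between_le) (simp add: l_def)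
  moreover have "prob large_sum \<le> (2 * real K + 1) * K * h t * (x1 + 3 * y * tail y) / t"
    using prob_truncated_sum_ge_le[of y c K] y t h K by (simp add: large_sum_def c_def field_simps)
  moreover have "prob (no_right \<union> no_left \<union> hit_gap \<union> large_sum)
      \<le> prob no_right + prob no_left + prob hit_gap + prob large_sum"
    using sets by (meson add_mono measure_Un_le order_trans sets.Un order_refl)
  ultimately have bad: "prob (no_right \<union> no_left \<union> hit_gap \<union> large_sum)
      \<le> 2 * (1 - tail l) ^ K + (2 * real K + 1) * (tail y - tail l)
        + (2 * real K + 1) * K * h t * (x1 + 3 * y * tail y) / t"
    by linarith
  have "AE \<omega> in M. \<forall>z. \<sigma> z \<omega> > 0" using positive by (simp add: AE_all_countable)
  then have "AE \<omega> in M. \<omega> \<in> space M - (no_right \<union> no_left \<union> hit_gap \<union> large_sum)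
      \<longrightarrow> \<omega> \<in> event_A M \<sigma> h t"
  proof eventually_elim
    case (elim \<omega>)
    show ?case
    proof
      assume \<omega>: "\<omega> \<in> space M - (no_right \<union> no_left \<union> hit_gap \<union> large_sum)"
      show "\<omega> \<in> event_A M \<sigma> h t"
      proof (rule mem_event_A_if_good_window[OF _ elim K])
        show "\<omega> \<in> space M" using \<omega> by simp
        show "\<exists>n\<in>{1..K}. ell t < \<sigma> (int n) \<omega>"
          using \<omega> unfolding no_right_def l_def by (auto simp: not_le)
        show "\<exists>n\<in>{0..K}. ell t < \<sigma> (- int n) \<omega>"
          using \<omega> unfolding no_left_def l_def by (auto simp: not_le)
        show "\<forall>z\<in>{-int K..int K}. \<not> (y < \<sigma> z \<omega> \<and> \<sigma> z \<omega> \<le> ell t)"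
          using \<omega> unfolding hit_gap_def l_def by auto
        show "(\<Sum>z\<in>{-int K..int K}. truncated y (\<sigma> z \<omega>)) < t / (h t * real K)"
          using \<omega> unfolding large_sum_def c_def by auto
      qed
    qed
  qed
  then have "prob (space M - (no_right \<union> no_left \<union> hit_gap \<union> large_sum)) \<le> prob (event_A M \<sigma> h t)"
    by (rule finite_measure_mono_AE) simp
  moreover have "prob (space M - (no_right \<union> no_left \<union> hit_gap \<union> large_sum))
      = 1 - prob (no_right \<union> no_left \<union> hit_gap \<union> large_sum)"
    using sets by (intro prob_compl) auto
  ultimately show ?thesis using bad by (simp add: l_def)
qed

lemma prob_event_A_ge_failure_bound:
  assumes t: "0 < t" and H: "4 \<le> h t" and ell: "2 * x1 \<le> ell t"
    and window: "tailL M \<sigma> (ell t) * (1 - 1 / h t) < tailL M \<sigma> (ell t / h t ^ 3)"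
    and h_sq: "h t ^ 2 \<le> tailL M \<sigma> (ell t)"
  shows "1 - failure_bound x1 (h t) (ell t) \<le> prob (event_A M \<sigma> h t)"
proof -
  define K where "K = nat \<lceil>sqrt (h t) / tail (ell t)\<rceil>"
  have l: "0 < ell t" using ell threshold_pos by simp
  have "1 \<le> h t ^ 3" using H by (simp add: one_le_power)
  then have y: "0 < ell t / h t ^ 3" "ell t / h t ^ 3 \<le> ell t"
    using l H by (auto simp: divide_le_eq)
  have "2 \<le> sqrt (h t)" using H real_sqrt_le_mono[of 4 "h t"] by simp
  then have "1 \<le> sqrt (h t) / tail (ell t)"
    using tail_pos[of "ell t"] tail_le_1[of "ell t"] by (simp add: field_simps)
  also have "\<dots> \<le> real K" unfolding K_def by linarith
  finally have "1 \<le> K" by simp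
  have "2 * (1 - tail (ell t)) ^ K + (2 * real K + 1) * (tail (ell t / h t ^ 3) - tail (ell t))
      + (2 * real K + 1) * K * h t * (x1 + 3 * (ell t / h t ^ 3) * tail (ell t / h t ^ 3)) / t
      \<le> failure_bound x1 (h t) (ell t)"
    unfolding failure_bound_def
  proof (rule failure_terms_le[OF _ tail_pos tail_le_1 H l K_def])
    show "0 \<le> x1" using threshold_pos by simp
    show "0 \<le> tail (ell t / h t ^ 3)" by (rule tail_nonneg)
    show "tail (ell t / h t ^ 3) - tail (ell t) \<le> tail (ell t) / (h t - 1)"
      and "tail (ell t / h t ^ 3) \<le> 2 * tail (ell t)"
      using tail_window_le[OF _ window] H by auto
    show "4/9 * ell t / tail (ell t) < t" by (rule ell_over_tail_less[OF t ell])
    show "h t ^ 2 \<le> 1 / tail (ell t)" using h_sq by (simp add: tailL_eq)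
  qed
  moreover have "0 < h t" using H by simp
  ultimately show ?thesis using prob_event_A_ge[where h=h, OF t _ \<open>1 \<le> K\<close> y] by linarith
qed

lemma failure_bound_tendsto_0:
  assumes "filterlim H at_top F" and "filterlim l at_top F"
  shows "((\<lambda>t. failure_bound x1 (H t) (l t)) \<longlongrightarrow> 0) F"
proof -
  have "((\<lambda>x::real. exp (- sqrt x)) \<longlongrightarrow> 0) at_top"
    and "((\<lambda>x::real. (2 * sqrt x + 3) / (x - 1)) \<longlongrightarrow> 0) at_top"
    and "((\<lambda>x::real. 6 / x) \<longlongrightarrow> 0) at_top"
    by real_asymp+
  then have "((\<lambda>t. exp (- sqrt (H t))) \<longlongrightarrow> 0) F"
    and "((\<lambda>t. (2 * sqrt (H t) + 3) / (H t - 1)) \<longlongrightarrow> 0) F"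
    and "((\<lambda>t. 6 / H t) \<longlongrightarrow> 0) F"
    by (auto intro: filterlim_compose[OF _ assms(1)])
  moreover have "((\<lambda>t. x1 / (l t * tail (l t) ^ 2)) \<longlongrightarrow> 0) F"
    using filterlim_compose[OF filterlim_times_tail_squared assms(2)]
    by (intro tendsto_divide_0[OF tendsto_const] filterlim_at_top_imp_at_infinity)
  ultimately have "((\<lambda>t. failure_bound x1 (H t) (l t)) \<longlongrightarrow> 2 * 0 + 0 + 45/2 * (0 + 0)) F"
    unfolding failure_bound_def by (intro tendsto_intros)
  then show ?thesis by simp
qed

lemma eventually_prob_event_A_ge:
  assumes h: "filterlim h at_top at_top"
    and h_sq: "(\<lambda>t. (h t)\<^sup>2) \<in> o[at_top](\<lambda>t. rt M \<sigma> t)"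
    and window: "eventually (\<lambda>t. tailL M \<sigma> (ell t) * (1 - 1 / h t) < tailL M \<sigma> (ell t / h t ^ 3)) at_top"
  shows "eventually (\<lambda>t. 1 - failure_bound x1 (h t) (ell t) \<le> prob (event_A M \<sigma> h t)) at_top"
proof -
  have "eventually (\<lambda>t. 4 \<le> h t) at_top" using h by (simp add: filterlim_at_top)
  moreover have "eventually (\<lambda>t. 2 * x1 \<le> ell t) at_top"
    using filterlim_ell_at_top by (simp add: filterlim_at_top)
  moreover have "eventually (\<lambda>t. norm ((h t)\<^sup>2) \<le> 1 * norm (rt M \<sigma> t)) at_top"
    by (rule landau_o.smallD[OF h_sq]) simp
  ultimately show ?thesis using window eventually_gt_at_top[of 0]
  proof eventually_elim
    case (elim t)
    have "h t ^ 2 \<le> tailL M \<sigma> (ell t)"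
      using elim(3) tailL_ge_1[of "ell t"] by (simp add: rt_def)
    then show ?case using elim by (intro prob_event_A_ge_failure_bound) auto
  qed
qed

end

end

theorem proposition3p9:
  fixes M :: "'a measure" and \<sigma> :: "int \<Rightarrow> 'a \<Rightarrow> real" and h :: "real \<Rightarrow> real"
  assumes "prob_space M"
    and "\<And>z. \<sigma> z \<in> borel_measurable M"
    and "prob_space.indep_vars M (\<lambda>_. borel) \<sigma> UNIV"
    and "\<And>z. distr M borel (\<sigma> z) = distr M borel (\<sigma> 0)"
    and "\<And>z. AE \<omega> in M. \<sigma> z \<omega> > 0"
    and "slowly_varying (tailL M \<sigma>)"
    and "filterlim h at_top at_top"
    and "(\<lambda>t. (h t)\<^sup>2) \<in> o[at_top](\<lambda>t. rt M \<sigma> t)"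
    and "eventually (\<lambda>t. tailL M \<sigma> (ellt M \<sigma> t / (h t)^3) > tailL M \<sigma> (ellt M \<sigma> t) * (1 - 1 / h t)
                        \<and> tailL M \<sigma> (ellt M \<sigma> t * (h t)^3) < tailL M \<sigma> (ellt M \<sigma> t) * (1 + 1 / h t)) at_top"
  shows "((\<lambda>t. measure M (event_A M \<sigma> h t)) \<longlongrightarrow> 1) at_top"
proof -
  interpret slowly_varying_iid M \<sigma>
    using assms(1-6) by (intro slowly_varying_iid.intro slowly_varying_iid_axioms.intro)
  obtain x1 where x1: "tail_doubling tail x1"
    using exists_tail_doubling by blast
  have lim: "((\<lambda>t. 1 - failure_bound x1 (h t) (ell t)) \<longlongrightarrow> 1) at_top"
    using tendsto_diff[OF tendsto_const failure_bound_tendsto_0[OF x1 assms(7) filterlim_ell_at_top]]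
    by simp
  have lower: "eventually (\<lambda>t. 1 - failure_bound x1 (h t) (ell t) \<le> prob (event_A M \<sigma> h t)) at_top"
    using eventually_mono[OF assms(9)] by (intro eventually_prob_event_A_ge[OF x1 assms(7,8)]) auto
  have upper: "eventually (\<lambda>t. prob (event_A M \<sigma> h t) \<le> 1) at_top"
    by simp
  show ?thesis
    by (rule tendsto_sandwich[OF lower upper lim tendsto_const])
qed

end
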